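(* Let $\mathcal{H}$ be a real Hilbert space, let $A\colon \mathcal{H}\rightrightarrows\mathcal{H}$ be maximally monotone and let $B\colon \mathcal{H}\to\mathcal{H}$ be monotone and $L$-Lipschitz. Let $x\in(A+B)^{-1}(0)$, suppose $(\lambda_k)_{k\geq-1}\subseteq\left[\varepsilon,\frac{1-2\varepsilon}{2L}\right]$ for some $\varepsilon>0$, and let $(x_k)$ be given by $x_0,x_{-1}\in\mathcal{H}$ and $$x_{k+1} = J_{\lambda_k A}\bigl(x_k - \lambda_k B(x_k) - \lambda_{k-1}(B(x_k)-B(x_{k-1}))\bigr)\quad\forall k\in\mathbb{N}.$$ Then, for all $k\in\mathbb{N}$, $$\|x_{k+1}-x\|^2+2\lambda_k\langle B(x_{k+1})-B(x_k),x-x_{k+1}\rangle + \left(\tfrac{1}{2}+\varepsilon\right)\|x_{k+1}-x_k\|^2 \leq \|x_k-x\|^2 + 2\lambda_{k-1}\langle B(x_k)-B(x_{k-1}), x-x_{k}\rangle +\tfrac{1}{2}\|x_{k}-x_{k-1}\|^2.$$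
   Context: $J_{\lambda A}:=(I+\lambda A)^{-1}$ denotes the resolvent. *)

theory Defs
  imports "HOL-Analysis.Analysis"
begin

text \<open>Set-valued operators on a real inner product space are modelled as maps
  A :: 'a \<Rightarrow> 'a set (the value A x is the image set; its graph is {(x,u). u \<in> A x}).\<close>

definition monotone_op :: "('a::real_inner \<Rightarrow> 'a set) \<Rightarrow> bool" where
  "monotone_op A \<longleftrightarrow>
     (\<forall>x y u v. u \<in> A x \<longrightarrow> v \<in> A y \<longrightarrow> inner (x - y) (u - v) \<ge> 0)"

definition maximal_monotone :: "('a::real_inner \<Rightarrow> 'a set) \<Rightarrow> bool" where
  "maximal_monotone A \<longleftrightarrow>
     monotone_op A \<and> (\<forall>B. monotone_op B \<and> (\<forall>x. A x \<subseteq> B x) \<longrightarrow> B = A)"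

definition monotone_fun :: "('a::real_inner \<Rightarrow> 'a) \<Rightarrow> bool" where
  "monotone_fun B \<longleftrightarrow> (\<forall>x y. inner (x - y) (B x - B y) \<ge> 0)"

text \<open>Resolvent J_{\<lambda>A} = (I + \<lambda>A)^{-1}, as a set-valued inverse:
  z \<in> J_{\<lambda>A}(y) iff y \<in> z + \<lambda> A z.  (For maximally monotone A and \<lambda> > 0 it is
  single-valued and everywhere defined.)\<close>
definition resolvent :: "real \<Rightarrow> ('a::real_inner \<Rightarrow> 'a set) \<Rightarrow> 'a \<Rightarrow> 'a set" where
  "resolvent lam A y = {z. \<exists>u \<in> A z. y = z + lam *\<^sub>R u}"

end

theory Submission
  imports Defs
begin

text \<open>Write \<open>x_{k+1} = J_{\<lambda>_k A}(w_k)\<close>. Monotonicity of \<open>A\<close>, tested against the point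
  \<open>(x, -B x)\<close> of its graph, together with monotonicity of \<open>B\<close> gives
  \<open>0 \<le> \<langle>x_{k+1} - x, w_k - x_{k+1} + \<lambda>_k B x_{k+1}\<rangle>\<close>.
  After expanding \<open>w_k\<close>, polarization turns \<open>\<langle>x_{k+1} - x, x_k - x_{k+1}\<rangle>\<close> into squared
  distances, and the only remaining cross term \<open>\<lambda>_{k-1} \<langle>x_k - x_{k+1}, B x_k - B x_{k-1}\<rangle>\<close>
  is absorbed by the Lipschitz bound on \<open>B\<close> and Young's inequality, since
  \<open>2 L \<lambda>_{k-1} \<le> 1 - 2\<epsilon>\<close>.\<close>

lemma resolvent_step_inner_nonneg:
  fixes A :: "'a::real_inner \<Rightarrow> 'a set" and B :: "'a \<Rightarrow> 'a"
  assumes "monotone_op A" and "monotone_fun B" and "0 \<le> l"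
    and "p \<in> resolvent l A w" and "- B x \<in> A x"
  shows "0 \<le> inner (p - x) (w - p + l *\<^sub>R B p)"
proof -
  obtain a where a: "a \<in> A p" and w: "w = p + l *\<^sub>R a"
    using \<open>p \<in> resolvent l A w\<close> by (auto simp: resolvent_def)
  have "0 \<le> inner (p - x) (a - - B x)"
    using \<open>monotone_op A\<close> a \<open>- B x \<in> A x\<close> unfolding monotone_op_def by blast
  moreover have "0 \<le> inner (p - x) (B p - B x)"
    using \<open>monotone_fun B\<close> by (simp add: monotone_fun_def)
  ultimately have "0 \<le> l * inner (p - x) (a + B p)"
    using \<open>0 \<le> l\<close> by (simp add: inner_diff_right inner_add_right)
  then show ?thesis
    by (simp add: w inner_add_right distrib_left)
qed

lemma lipschitz_inner_le_sum_squares: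
  fixes B :: "'a::real_inner \<Rightarrow> 'a"
  assumes "L-lipschitz_on UNIV B" and "0 \<le> m"
  shows "2 * m * inner v (B y - B z) \<le> L * m * ((norm (y - z))\<^sup>2 + (norm v)\<^sup>2)"
proof -
  have "0 \<le> L" using assms(1) by (rule lipschitz_on_nonneg)
  have "inner v (B y - B z) \<le> norm v * norm (B y - B z)"
    by (rule norm_cauchy_schwarz)
  also have "\<dots> \<le> norm v * (L * norm (y - z))"
    by (intro mult_left_mono lipschitz_on_normD[OF assms(1)]) auto
  also have "\<dots> = L * (norm (y - z) * norm v)"
    by simp
  also have "\<dots> \<le> L * (((norm (y - z))\<^sup>2 + (norm v)\<^sup>2) / 2)"
    using \<open>0 \<le> L\<close> sum_squares_ge_zero[of "norm (y - z) - norm v" 0]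
    by (intro mult_left_mono) (auto simp: power2_eq_square algebra_simps)
  finally have "2 * inner v (B y - B z) \<le> L * ((norm (y - z))\<^sup>2 + (norm v)\<^sup>2)"
    by simp
  from mult_left_mono[OF this \<open>0 \<le> m\<close>] show ?thesis
    by (simp add: algebra_simps)
qed

theorem lemma2p4:
  fixes A :: "'a::{real_inner, complete_space} \<Rightarrow> 'a set"
    and B :: "'a \<Rightarrow> 'a"
    and L \<epsilon> :: real
    and lam :: "int \<Rightarrow> real"
    and xs :: "int \<Rightarrow> 'a"
    and x :: 'a
  assumes A_max: "maximal_monotone A"
    and B_mono: "monotone_fun B"
    and B_lip: "L-lipschitz_on UNIV B"
    and zero: "0 \<in> {u + B x | u. u \<in> A x}"
    and eps: "\<epsilon> > 0"
    and lam_bounds: "\<And>k. k \<ge> -1 \<Longrightarrow> \<epsilon> \<le> lam k \<and> 2 * L * lam k \<le> 1 - 2 * \<epsilon>"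
    and iter: "\<And>k. k \<ge> 0 \<Longrightarrow>
       xs (k + 1) \<in> resolvent (lam k) A
         (xs k - lam k *\<^sub>R B (xs k) - lam (k - 1) *\<^sub>R (B (xs k) - B (xs (k - 1))))"
    and k: "k \<ge> (0::int)"
  shows "(norm (xs (k + 1) - x))\<^sup>2
           + 2 * lam k * inner (B (xs (k + 1)) - B (xs k)) (x - xs (k + 1))
           + (1 / 2 + \<epsilon>) * (norm (xs (k + 1) - xs k))\<^sup>2
         \<le> (norm (xs k - x))\<^sup>2
           + 2 * lam (k - 1) * inner (B (xs k) - B (xs (k - 1))) (x - xs k)
           + 1 / 2 * (norm (xs k - xs (k - 1)))\<^sup>2"
proof -
  define p q r l m where "p = xs (k + 1)" and "q = xs k" and "r = xs (k - 1)"
    and "l = lam k" and "m = lam (k - 1)"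
  have l: "\<epsilon> \<le> l" and m: "\<epsilon> \<le> m" "2 * L * m \<le> 1 - 2 * \<epsilon>"
    using lam_bounds[of k] lam_bounds[of "k - 1"] k by (auto simp: l_def m_def)
  have "- B x \<in> A x"
    using zero by (auto simp: eq_neg_iff_add_eq_0[symmetric])
  then have "0 \<le> inner (p - x) (q - l *\<^sub>R B q - m *\<^sub>R (B q - B r) - p + l *\<^sub>R B p)"
    using A_max B_mono iter[OF k] l eps
    by (intro resolvent_step_inner_nonneg) (auto simp: maximal_monotone_def p_def q_def r_def l_def m_def)
  then have step: "0 \<le> 2 * inner (p - x) (q - p) + 2 * l * inner (B p - B q) (p - x)
                        + 2 * m * inner (q - p) (B q - B r) - 2 * m * inner (B q - B r) (q - x)"
    by (simp add: inner_diff_right inner_add_right inner_diff_left inner_commute algebra_simps)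
  have polar: "2 * inner (p - x) (q - p) = (norm (q - x))\<^sup>2 - (norm (p - x))\<^sup>2 - (norm (q - p))\<^sup>2"
    using dot_norm[of "p - x" "q - p"] by simp
  have "2 * m * inner (q - p) (B q - B r) \<le> L * m * ((norm (q - r))\<^sup>2 + (norm (q - p))\<^sup>2)"
    using B_lip m eps by (intro lipschitz_inner_le_sum_squares) auto
  also have "\<dots> \<le> (1 / 2 - \<epsilon>) * ((norm (q - r))\<^sup>2 + (norm (q - p))\<^sup>2)"
    using m by (intro mult_right_mono) auto
  also have "\<dots> \<le> 1 / 2 * (norm (q - r))\<^sup>2 + (1 / 2 - \<epsilon>) * (norm (q - p))\<^sup>2"
    using eps by (simp add: algebra_simps)
  finally have young: "2 * m * inner (q - p) (B q - B r)
                         \<le> 1 / 2 * (norm (q - r))\<^sup>2 + (1 / 2 - \<epsilon>) * (norm (q - p))\<^sup>2" .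
  show ?thesis
    using step polar young
    unfolding p_def[symmetric] q_def[symmetric] r_def[symmetric] l_def[symmetric] m_def[symmetric]
    by (simp add: norm_minus_commute[of p q] inner_minus_right[symmetric] algebra_simps)
qed

end
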